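(* Every $\gamma_{\rm tg}$-critical graph is open twin-free.
   Context: A graph is open twin-free if it has no two distinct vertices $u,v$ with $N(u)=N(v)$. Total domination game on a graph without isolated vertices: Dominator and Staller alternately choose vertices, each chosen vertex must be adjacent to some vertex not yet totally dominated; the game ends when no legal move exists; Dominator minimizes, Staller maximizes the number of moves; $\gamma_{\rm tg}(G)$ is the number of moves in the Dominator-start game under optimal play. $G|v$ is $G$ with $v$ declared already totally dominated, with $\gamma_{\rm tg}(G|v)$ defined analogously. $G$ is $\gamma_{\rm tg}$-critical if $\gamma_{\rm tg}(G|v)<\gamma_{\rm tg}(G)$ for every vertex $v$. *)

theory Defs
  imports Main
begin

text \<open>A finite simple graph is given by a finite vertex set V and a symmetric,
irreflexive adjacency relation E; only edges between vertices of V matter.\<close>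

definition simple_graph :: "'a set \<Rightarrow> ('a \<Rightarrow> 'a \<Rightarrow> bool) \<Rightarrow> bool" where
  "simple_graph V E \<longleftrightarrow> finite V \<and> (\<forall>u v. E u v \<longrightarrow> E v u) \<and> (\<forall>v. \<not> E v v)"

definition nbhd :: "'a set \<Rightarrow> ('a \<Rightarrow> 'a \<Rightarrow> bool) \<Rightarrow> 'a \<Rightarrow> 'a set" where
  "nbhd V E v = {u \<in> V. E v u}"

definition no_isolated :: "'a set \<Rightarrow> ('a \<Rightarrow> 'a \<Rightarrow> bool) \<Rightarrow> bool" where
  "no_isolated V E \<longleftrightarrow> (\<forall>v\<in>V. nbhd V E v \<noteq> {})"

definition open_twin_free :: "'a set \<Rightarrow> ('a \<Rightarrow> 'a \<Rightarrow> bool) \<Rightarrow> bool" where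
  "open_twin_free V E \<longleftrightarrow> (\<forall>u\<in>V. \<forall>v\<in>V. u \<noteq> v \<longrightarrow> nbhd V E u \<noteq> nbhd V E v)"

text \<open>Game state: the set T of vertices already totally dominated.
A vertex v is a legal move iff it is adjacent to some vertex not yet totally dominated.\<close>
definition legal_moves :: "'a set \<Rightarrow> ('a \<Rightarrow> 'a \<Rightarrow> bool) \<Rightarrow> 'a set \<Rightarrow> 'a set" where
  "legal_moves V E T = {v \<in> V. \<exists>u \<in> nbhd V E v. u \<notin> T}"

text \<open>tg_value V E d T: number of remaining moves under optimal play from state T,
where d = True means Dominator (minimizer) is to move, d = False Staller (maximizer).\<close>
function tg_value :: "'a set \<Rightarrow> ('a \<Rightarrow> 'a \<Rightarrow> bool) \<Rightarrow> bool \<Rightarrow> 'a set \<Rightarrow> nat" where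
  "tg_value V E d T =
     (if \<not> finite V \<or> legal_moves V E T = {} then 0
      else if d then Min ((\<lambda>v. Suc (tg_value V E False (T \<union> nbhd V E v))) ` legal_moves V E T)
      else Max ((\<lambda>v. Suc (tg_value V E True (T \<union> nbhd V E v))) ` legal_moves V E T))"
  by pat_completeness auto
termination
proof (relation "measure (\<lambda>(V, E, d, T). card (V - T))")
  show "wf (measure (\<lambda>(V, E, d, T). card (V - T)))" by simp
next
  fix V :: "'a set" and E d T v
  assume "\<not> (\<not> finite V \<or> legal_moves V E T = {})" "v \<in> legal_moves V E T"
  then obtain u where "finite V" "u \<in> nbhd V E v" "u \<notin> T"
    by (auto simp: legal_moves_def)
  then have "V - (T \<union> nbhd V E v) \<subset> V - T" by (auto simp: nbhd_def)
  then have "card (V - (T \<union> nbhd V E v)) < card (V - T)"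
    using \<open>finite V\<close> by (meson finite_Diff psubset_card_mono)
  then show "((V, E, False, T \<union> nbhd V E v), V, E, d, T) \<in> measure (\<lambda>(V, E, d, T). card (V - T))"
    and "((V, E, True, T \<union> nbhd V E v), V, E, d, T) \<in> measure (\<lambda>(V, E, d, T). card (V - T))"
    by simp_all
qed

text \<open>Game total domination number (Dominator starts) of G and of G|v.\<close>
definition gamma_tg :: "'a set \<Rightarrow> ('a \<Rightarrow> 'a \<Rightarrow> bool) \<Rightarrow> nat" where
  "gamma_tg V E = tg_value V E True {}"

definition gamma_tg_pre :: "'a set \<Rightarrow> ('a \<Rightarrow> 'a \<Rightarrow> bool) \<Rightarrow> 'a \<Rightarrow> nat" where
  "gamma_tg_pre V E v = tg_value V E True {v}"

definition gamma_tg_critical :: "'a set \<Rightarrow> ('a \<Rightarrow> 'a \<Rightarrow> bool) \<Rightarrow> bool" where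
  "gamma_tg_critical V E \<longleftrightarrow> (\<forall>v\<in>V. gamma_tg_pre V E v < gamma_tg V E)"

end

theory Submission
  imports Defs
begin

text \<open>If u and v are open twins, a vertex w totally dominates u exactly when it totally
dominates v. Declaring u dominated while v is still undominated therefore changes nothing:
every vertex adjacent to u is adjacent to the undominated v, so the legal moves stay the same,
and after any move w the two positions again differ at most in u, with u and v dominated
simultaneously. By induction along the game, G|u has the same value as G, so G is not critical.\<close>

declare tg_value.simps[simp del]

lemma twin_mem_nbhd_iff:
  assumes "symp E" "w \<in> V" "u \<in> V" "v \<in> V" "nbhd V E u = nbhd V E v"
  shows "u \<in> nbhd V E w \<longleftrightarrow> v \<in> nbhd V E w"
proof -
  have "u \<in> nbhd V E w \<longleftrightarrow> w \<in> nbhd V E u" "v \<in> nbhd V E w \<longleftrightarrow> w \<in> nbhd V E v"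
    using assms by (auto simp: nbhd_def dest: sympD)
  then show ?thesis using assms(5) by simp
qed

lemma legal_moves_insert_twin:
  assumes "symp E" "u \<in> V" "v \<in> V" "u \<noteq> v" "nbhd V E u = nbhd V E v" "v \<notin> T"
  shows "legal_moves V E (insert u T) = legal_moves V E T"
proof
  show "legal_moves V E T \<subseteq> legal_moves V E (insert u T)"
  proof
    fix w assume "w \<in> legal_moves V E T"
    then obtain x where w: "w \<in> V" and x: "x \<in> nbhd V E w" "x \<notin> T"
      unfolding legal_moves_def by blast
    show "w \<in> legal_moves V E (insert u T)"
    proof (cases "x = u")
      case True
      then have "v \<in> nbhd V E w" using twin_mem_nbhd_iff[OF assms(1) w assms(2,3,5)] x by simp
      then show ?thesis using w assms(4,6) by (auto simp: legal_moves_def)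
    next
      case False
      then show ?thesis using w x unfolding legal_moves_def by blast
    qed
  qed
qed (auto simp: legal_moves_def)

lemma tg_value_insert_twin:
  assumes "symp E" "u \<in> V" "v \<in> V" "u \<noteq> v" "nbhd V E u = nbhd V E v"
    and "u \<in> T \<longleftrightarrow> v \<in> T"
  shows "tg_value V E d (insert u T) = tg_value V E d T"
  using assms
proof (induction V E d T rule: tg_value.induct)
  case (1 V E d T)
  show ?case
  proof (cases "u \<in> T")
    case True
    then show ?thesis by (simp add: insert_absorb)
  next
    case False
    then have legal: "legal_moves V E (insert u T) = legal_moves V E T"
      using legal_moves_insert_twin[of E u V v T] "1.prems" by simp
    show ?thesis
    proof (cases "\<not> finite V \<or> legal_moves V E T = {}")
      case True
      then show ?thesis by (subst (1 2) tg_value.simps) (simp add: legal)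
    next
      case stop: False
      have succ: "tg_value V E (\<not> d) (insert u T \<union> nbhd V E w) = tg_value V E (\<not> d) (T \<union> nbhd V E w)"
        if w: "w \<in> legal_moves V E T" for w
      proof -
        have "w \<in> V" using w by (simp add: legal_moves_def)
        then have "u \<in> T \<union> nbhd V E w \<longleftrightarrow> v \<in> T \<union> nbhd V E w"
          using twin_mem_nbhd_iff[of E w V u v] "1.prems" by simp
        then show ?thesis using "1.IH"[OF stop _ w] "1.prems"(1-5) by (cases d) auto
      qed
      then have "(\<lambda>w. Suc (tg_value V E (\<not> d) (insert u T \<union> nbhd V E w))) ` legal_moves V E T
          = (\<lambda>w. Suc (tg_value V E (\<not> d) (T \<union> nbhd V E w))) ` legal_moves V E T"
        by simp
      then show ?thesis
        using stop legal
        by (cases d) (simp_all add: tg_value.simps[of V E _ T] tg_value.simps[of V E _ "insert u T"])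
    qed
  qed
qed

theorem corollary4p3:
  fixes V :: "'a set" and E :: "'a \<Rightarrow> 'a \<Rightarrow> bool"
  assumes "simple_graph V E" and "no_isolated V E" and "gamma_tg_critical V E"
  shows "open_twin_free V E"
  unfolding open_twin_free_def
proof (intro ballI impI notI)
  fix u v assume twins: "u \<in> V" "v \<in> V" "u \<noteq> v" "nbhd V E u = nbhd V E v"
  have "symp E" using assms(1) by (simp add: simple_graph_def symp_def)
  then have "gamma_tg_pre V E u = gamma_tg V E"
    using tg_value_insert_twin[of E u V v "{}"] twins by (simp add: gamma_tg_pre_def gamma_tg_def)
  then show False using assms(3) twins(1) by (auto simp: gamma_tg_critical_def)
qed

end
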